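(* Assume the root system is indecomposable. Let $u \in W$ be rational with $u \neq w_0$, and let $\alpha \in \Delta$ be a simple root with $u^{-1}(\alpha) > 0$ and $u(\alpha) < 0$. Then $s_\alpha u$ is rational.
   Context: $W$ is the Weyl group of a reduced crystallographic root system $\Pi$ with simple roots $\Delta$, positive roots $\Pi_+$, longest element $w_0$, simple reflections $s_\alpha$. $\gamma>0$ means $\gamma\in\Pi_+$. $\alpha\le\beta$ iff $\beta-\alpha$ is a nonnegative integer combination of simple roots. For $A\subseteq\Pi_+$, $\mathrm{Adj}(A) = \{\alpha\in\Pi_+ : \exists\beta\in A,\ \alpha\le\beta\}$. For $u\in W$: $\nu^0(u) = u(\Pi_+)\cap\Pi_+$, $\nu^k(u) = u(\mathrm{Adj}\,\nu^{k-1}(u))\cap\Pi_+$, eventually constant with value $\nu(u)$; $u$ is rational iff $\nu(u) = \emptyset$. *)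

theory Defs
  imports "HOL-Analysis.Analysis"
begin

definition sref :: "'a::euclidean_space \<Rightarrow> 'a \<Rightarrow> 'a" where
  "sref \<alpha> x = x - (2 * (x \<bullet> \<alpha>) / (\<alpha> \<bullet> \<alpha>)) *\<^sub>R \<alpha>"

definition root_system :: "'a::euclidean_space set \<Rightarrow> bool" where
  "root_system R \<longleftrightarrow> finite R \<and> 0 \<notin> R \<and> span R = UNIV
     \<and> (\<forall>\<alpha>\<in>R. sref \<alpha> ` R = R)
     \<and> (\<forall>\<alpha>\<in>R. \<forall>\<beta>\<in>R. 2 * (\<beta> \<bullet> \<alpha>) / (\<alpha> \<bullet> \<alpha>) \<in> \<int>)
     \<and> (\<forall>\<alpha>\<in>R. \<forall>c::real. c *\<^sub>R \<alpha> \<in> R \<longrightarrow> c = 1 \<or> c = -1)"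

definition indecomposable :: "'a::euclidean_space set \<Rightarrow> bool" where
  "indecomposable R \<longleftrightarrow>
     \<not> (\<exists>A B. A \<noteq> {} \<and> B \<noteq> {} \<and> A \<union> B = R \<and> A \<inter> B = {}
            \<and> (\<forall>a\<in>A. \<forall>b\<in>B. a \<bullet> b = 0))"

definition nonneg_comb :: "'a::euclidean_space set \<Rightarrow> 'a \<Rightarrow> bool" where
  "nonneg_comb \<Delta> x \<longleftrightarrow> (\<exists>c::'a \<Rightarrow> nat. x = (\<Sum>\<delta>\<in>\<Delta>. real (c \<delta>) *\<^sub>R \<delta>))"

definition is_base :: "'a::euclidean_space set \<Rightarrow> 'a set \<Rightarrow> bool" where
  "is_base R \<Delta> \<longleftrightarrow> \<Delta> \<subseteq> R \<and> independent \<Delta>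
     \<and> (\<forall>\<beta>\<in>R. nonneg_comb \<Delta> \<beta> \<or> nonneg_comb \<Delta> (- \<beta>))"

definition pos_roots :: "'a::euclidean_space set \<Rightarrow> 'a set \<Rightarrow> 'a set" where
  "pos_roots R \<Delta> = {\<beta>\<in>R. nonneg_comb \<Delta> \<beta>}"

definition root_le :: "'a::euclidean_space set \<Rightarrow> 'a \<Rightarrow> 'a \<Rightarrow> bool" where
  "root_le \<Delta> \<alpha> \<beta> \<longleftrightarrow> nonneg_comb \<Delta> (\<beta> - \<alpha>)"

inductive_set weyl :: "'a::euclidean_space set \<Rightarrow> ('a \<Rightarrow> 'a) set" for R where
  weyl_id: "id \<in> weyl R"
| weyl_step: "\<alpha> \<in> R \<Longrightarrow> w \<in> weyl R \<Longrightarrow> sref \<alpha> \<circ> w \<in> weyl R"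

definition wlen :: "'a::euclidean_space set \<Rightarrow> ('a \<Rightarrow> 'a) \<Rightarrow> nat" where
  "wlen \<Delta> w = (LEAST n. \<exists>ts. length ts = n \<and> set ts \<subseteq> \<Delta>
                         \<and> w = foldr (\<lambda>\<alpha> f. sref \<alpha> \<circ> f) ts id)"

definition longest :: "'a::euclidean_space set \<Rightarrow> 'a set \<Rightarrow> ('a \<Rightarrow> 'a)" where
  "longest R \<Delta> = (THE w. w \<in> weyl R \<and> (\<forall>v\<in>weyl R. wlen \<Delta> v \<le> wlen \<Delta> w))"

definition Adj :: "'a::euclidean_space set \<Rightarrow> 'a set \<Rightarrow> 'a set \<Rightarrow> 'a set" where
  "Adj R \<Delta> A = {\<alpha>\<in>pos_roots R \<Delta>. \<exists>\<beta>\<in>A. root_le \<Delta> \<alpha> \<beta>}"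

fun nu_k :: "'a::euclidean_space set \<Rightarrow> 'a set \<Rightarrow> nat \<Rightarrow> ('a \<Rightarrow> 'a) \<Rightarrow> 'a set" where
  "nu_k R \<Delta> 0 u = u ` pos_roots R \<Delta> \<inter> pos_roots R \<Delta>"
| "nu_k R \<Delta> (Suc k) u = u ` Adj R \<Delta> (nu_k R \<Delta> k u) \<inter> pos_roots R \<Delta>"

definition nu :: "'a::euclidean_space set \<Rightarrow> 'a set \<Rightarrow> ('a \<Rightarrow> 'a) \<Rightarrow> 'a set" where
  "nu R \<Delta> u = (THE S. \<exists>N. \<forall>k\<ge>N. nu_k R \<Delta> k u = S)"

definition rational :: "'a::euclidean_space set \<Rightarrow> 'a set \<Rightarrow> ('a \<Rightarrow> 'a) \<Rightarrow> bool" where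
  "rational R \<Delta> u \<longleftrightarrow> nu R \<Delta> u = {}"

end

(*
  If s\<^sub>\<alpha> u were not rational, \<nu>(s\<^sub>\<alpha> u) would be a nonempty set S with
  S \<subseteq> s\<^sub>\<alpha> u (Adj S) \<inter> \<Pi>\<^sub>+.  Then T = u (Adj (s\<^sub>\<alpha> S)) \<inter> \<Pi>\<^sub>+ is nonempty and satisfies
  T \<subseteq> u (Adj T) \<inter> \<Pi>\<^sub>+, so T \<subseteq> \<nu>(u), contradicting the rationality of u.

  The inclusion rests on one fact about roots: if \<gamma> \<le> \<delta> are positive roots and \<gamma> \<noteq> \<alpha>, some
  positive root \<gamma> - t\<alpha> (t \<in> \<nat>) lies below s\<^sub>\<alpha> \<delta>; and u (\<gamma> - t\<alpha>) = u \<gamma> + t (- u \<alpha>) \<ge> u \<gamma>.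
  That fact says that the lowest \<alpha>-coordinate on the \<alpha>-string through \<gamma> is monotone in \<gamma>;
  it is proved by walking from \<gamma> to \<delta> one simple root at a time, using that \<alpha>-strings are
  unbroken.
*)
theory Submission
  imports Defs
begin

lemma sref_self: "\<alpha> \<noteq> 0 \<Longrightarrow> sref \<alpha> \<alpha> = - \<alpha>"
  unfolding sref_def by (simp add: scaleR_2)

lemma inner_sref_self: "\<alpha> \<noteq> 0 \<Longrightarrow> sref \<alpha> x \<bullet> \<alpha> = - (x \<bullet> \<alpha>)"
  unfolding sref_def by (simp add: algebra_simps inner_diff_left)

lemma sref_sref: "\<alpha> \<noteq> 0 \<Longrightarrow> sref \<alpha> (sref \<alpha> x) = x"
  by (simp add: sref_def[of \<alpha> "sref \<alpha> x"] inner_sref_self) (simp add: sref_def)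

lemma linear_sref: "linear (sref \<alpha>)"
  unfolding sref_def
  by (rule linearI) (simp_all add: inner_add_left algebra_simps scaleR_add_left add_divide_distrib
      scaleR_diff_left diff_divide_distrib)

lemma nonneg_comb_add:
  assumes "nonneg_comb \<Delta> x" and "nonneg_comb \<Delta> y"
  shows "nonneg_comb \<Delta> (x + y)"
proof -
  obtain c d :: "'a \<Rightarrow> nat" where "x = (\<Sum>\<delta>\<in>\<Delta>. real (c \<delta>) *\<^sub>R \<delta>)" and "y = (\<Sum>\<delta>\<in>\<Delta>. real (d \<delta>) *\<^sub>R \<delta>)"
    using assms unfolding nonneg_comb_def by blast
  then have "x + y = (\<Sum>\<delta>\<in>\<Delta>. real (c \<delta> + d \<delta>) *\<^sub>R \<delta>)"
    by (simp add: sum.distrib scaleR_add_left)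
  then show ?thesis unfolding nonneg_comb_def by (rule exI[where x = "\<lambda>\<delta>. c \<delta> + d \<delta>"])
qed

lemma root_le_trans: "root_le \<Delta> x y \<Longrightarrow> root_le \<Delta> y z \<Longrightarrow> root_le \<Delta> x z"
  unfolding root_le_def using nonneg_comb_add[of \<Delta> "z - y" "y - x"] by simp

lemma Adj_subset_pos_roots: "Adj R \<Delta> A \<subseteq> pos_roots R \<Delta>"
  unfolding Adj_def by auto

lemma Adj_mono: "A \<subseteq> B \<Longrightarrow> Adj R \<Delta> A \<subseteq> Adj R \<Delta> B"
  unfolding Adj_def by auto

lemma nu_k_Suc_subset: "nu_k R \<Delta> (Suc k) u \<subseteq> nu_k R \<Delta> k u"
proof (induction k)
  case 0
  show ?case using Adj_subset_pos_roots[of R \<Delta>] by auto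
next
  case (Suc k)
  then have "Adj R \<Delta> (nu_k R \<Delta> (Suc k) u) \<subseteq> Adj R \<Delta> (nu_k R \<Delta> k u)"
    by (rule Adj_mono)
  then show ?case by auto
qed

lemma nu_k_subset_pos_roots: "nu_k R \<Delta> k u \<subseteq> pos_roots R \<Delta>"
  by (cases k) auto

lemma nu_k_stabilizes:
  assumes "finite (pos_roots R \<Delta>)"
  obtains N where "nu_k R \<Delta> (Suc N) u = nu_k R \<Delta> N u"
proof -
  have "\<exists>N. nu_k R \<Delta> (Suc N) u = nu_k R \<Delta> N u"
  proof (rule ccontr)
    assume "\<not> ?thesis"
    then have strict: "nu_k R \<Delta> (Suc k) u \<subset> nu_k R \<Delta> k u" for k
      using nu_k_Suc_subset by blast
    have "card (nu_k R \<Delta> k u) + k \<le> card (pos_roots R \<Delta>)" for k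
    proof (induction k)
      case 0
      show ?case using card_mono[OF assms nu_k_subset_pos_roots[of R \<Delta> 0 u]] by simp
    next
      case (Suc k)
      have "card (nu_k R \<Delta> (Suc k) u) < card (nu_k R \<Delta> k u)"
        by (rule psubset_card_mono[OF finite_subset[OF nu_k_subset_pos_roots assms] strict])
      with Suc show ?case by simp
    qed
    from this[of "Suc (card (pos_roots R \<Delta>))"] show False by simp
  qed
  then show thesis using that by blast
qed

lemma nu_k_eq_from:
  assumes "nu_k R \<Delta> (Suc N) u = nu_k R \<Delta> N u" and "N \<le> k"
  shows "nu_k R \<Delta> k u = nu_k R \<Delta> N u"
  using assms(2)
proof (induction k rule: dec_induct)
  case (step k)
  then show ?case using assms(1) by simp
qed simp

lemma nu_eq_nu_k:
  assumes "nu_k R \<Delta> (Suc N) u = nu_k R \<Delta> N u"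
  shows "nu R \<Delta> u = nu_k R \<Delta> N u"
  unfolding nu_def
proof (rule the_equality)
  show "\<exists>N'. \<forall>k\<ge>N'. nu_k R \<Delta> k u = nu_k R \<Delta> N u"
    using nu_k_eq_from[OF assms] by blast
next
  fix S assume "\<exists>N'. \<forall>k\<ge>N'. nu_k R \<Delta> k u = S"
  then obtain N' where "\<forall>k\<ge>N'. nu_k R \<Delta> k u = S" by blast
  then show "S = nu_k R \<Delta> N u"
    using nu_k_eq_from[OF assms, of "max N N'"] by simp
qed

lemma post_fixed_subset_nu_k:
  assumes "T \<subseteq> u ` Adj R \<Delta> T \<inter> pos_roots R \<Delta>"
  shows "T \<subseteq> nu_k R \<Delta> k u"
proof (induction k)
  case 0
  have "u ` Adj R \<Delta> T \<subseteq> u ` pos_roots R \<Delta>"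
    by (rule image_mono[OF Adj_subset_pos_roots])
  then show ?case using assms by auto
next
  case (Suc k)
  have "u ` Adj R \<Delta> T \<subseteq> u ` Adj R \<Delta> (nu_k R \<Delta> k u)"
    by (rule image_mono[OF Adj_mono[OF Suc.IH]])
  then show ?case using assms by auto
qed

text \<open>\<open>\<nu>(u)\<close> is the greatest post-fixed point of \<open>T \<mapsto> u(Adj T) \<inter> \<Pi>\<^sub>+\<close>.\<close>
lemma rational_iff_no_post_fixed:
  assumes "finite (pos_roots R \<Delta>)"
  shows "rational R \<Delta> u \<longleftrightarrow> (\<forall>T. T \<subseteq> u ` Adj R \<Delta> T \<inter> pos_roots R \<Delta> \<longrightarrow> T = {})"
proof -
  obtain N where N: "nu_k R \<Delta> (Suc N) u = nu_k R \<Delta> N u"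
    using nu_k_stabilizes[OF assms] by blast
  have fixed: "nu_k R \<Delta> N u \<subseteq> u ` Adj R \<Delta> (nu_k R \<Delta> N u) \<inter> pos_roots R \<Delta>"
    using N by simp
  show ?thesis
    unfolding rational_def nu_eq_nu_k[OF N]
    using post_fixed_subset_nu_k[of _ u R \<Delta> N] fixed by (metis subset_empty)
qed

locale based_root_system =
  fixes R \<Delta> :: "'a::euclidean_space set"
  assumes root_system: "root_system R" and base: "is_base R \<Delta>"
begin

lemma finite_roots: "finite R"
  using root_system by (simp add: root_system_def)

lemma nonzero_root: "x \<in> R \<Longrightarrow> x \<noteq> 0"
  using root_system by (auto simp: root_system_def)

lemma sref_in_roots: "\<alpha> \<in> R \<Longrightarrow> x \<in> R \<Longrightarrow> sref \<alpha> x \<in> R"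
  using root_system by (auto simp: root_system_def)

lemma cartan_integer: "\<alpha> \<in> R \<Longrightarrow> x \<in> R \<Longrightarrow> 2 * (x \<bullet> \<alpha>) / (\<alpha> \<bullet> \<alpha>) \<in> \<int>"
  using root_system by (simp add: root_system_def)

lemma roots_reduced: "\<alpha> \<in> R \<Longrightarrow> c *\<^sub>R \<alpha> \<in> R \<Longrightarrow> c = 1 \<or> c = -1"
  using root_system by (simp add: root_system_def)

lemma base_subset_roots: "\<Delta> \<subseteq> R"
  using base by (simp add: is_base_def)

lemma independent_base: "independent \<Delta>"
  using base by (simp add: is_base_def)

lemma finite_base: "finite \<Delta>"
  using base_subset_roots finite_roots finite_subset by blast

lemma uminus_in_roots: "x \<in> R \<Longrightarrow> - x \<in> R"
  using sref_in_roots[of x x] by (simp add: sref_self nonzero_root)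

lemma span_base_UNIV: "span \<Delta> = UNIV"
proof -
  have "nonneg_comb \<Delta> x \<Longrightarrow> x \<in> span \<Delta>" for x
    unfolding nonneg_comb_def by (auto intro: span_sum span_scale span_base)
  then have "R \<subseteq> span \<Delta>"
    using base span_neg unfolding is_base_def by fastforce
  then have "span R \<subseteq> span \<Delta>"
    by (simp add: span_minimal)
  then show ?thesis
    using root_system by (auto simp: root_system_def)
qed

definition coord :: "'a \<Rightarrow> 'a \<Rightarrow> real" where
  "coord x i = representation \<Delta> x i"

lemma coord_add [simp]: "coord (x + y) i = coord x i + coord y i"
  unfolding coord_def by (simp add: representation_add independent_base span_base_UNIV)

lemma coord_diff [simp]: "coord (x - y) i = coord x i - coord y i"
  unfolding coord_def by (simp add: representation_diff independent_base span_base_UNIV)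

lemma coord_uminus [simp]: "coord (- x) i = - coord x i"
  unfolding coord_def by (simp add: representation_neg independent_base span_base_UNIV)

lemma coord_scaleR [simp]: "coord (c *\<^sub>R x) i = c * coord x i"
  unfolding coord_def by (simp add: representation_scale independent_base span_base_UNIV)

lemma coord_zero [simp]: "coord 0 i = 0"
  unfolding coord_def by (simp add: representation_zero)

lemma coord_base [simp]: "j \<in> \<Delta> \<Longrightarrow> coord j i = (if i = j then 1 else 0)"
  unfolding coord_def by (simp add: representation_basis independent_base)

lemma sum_coord: "(\<Sum>i\<in>\<Delta>. coord x i *\<^sub>R i) = x"
  unfolding coord_def
  by (rule sum_representation_eq) (auto simp: independent_base finite_base span_base_UNIV)

lemma coord_eqI: "(\<And>i. i \<in> \<Delta> \<Longrightarrow> coord x i = coord y i) \<Longrightarrow> x = y"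
  by (metis (no_types, lifting) sum_coord sum.cong)

lemma nonneg_comb_iff_coord: "nonneg_comb \<Delta> x \<longleftrightarrow> (\<forall>i\<in>\<Delta>. coord x i \<in> \<nat>)"
proof
  assume "nonneg_comb \<Delta> x"
  then obtain c :: "'a \<Rightarrow> nat" where x: "x = (\<Sum>\<delta>\<in>\<Delta>. real (c \<delta>) *\<^sub>R \<delta>)"
    unfolding nonneg_comb_def by blast
  have "coord x i = real (c i)" if "i \<in> \<Delta>" for i
  proof -
    have "coord x i = (\<Sum>\<delta>\<in>\<Delta>. if \<delta> = i then real (c \<delta>) else 0)"
      unfolding x coord_def
      by (simp add: representation_sum representation_scale representation_basis
          independent_base span_base_UNIV if_distrib cong: if_cong) (auto intro: sum.cong)
    also have "\<dots> = real (c i)"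
      using that finite_base by simp
    finally show ?thesis .
  qed
  then show "\<forall>i\<in>\<Delta>. coord x i \<in> \<nat>" by simp
next
  assume "\<forall>i\<in>\<Delta>. coord x i \<in> \<nat>"
  then have "real (nat \<lfloor>coord x i\<rfloor>) = coord x i" if "i \<in> \<Delta>" for i
    using that by (auto elim!: Nats_cases)
  then have "x = (\<Sum>\<delta>\<in>\<Delta>. real (nat \<lfloor>coord x \<delta>\<rfloor>) *\<^sub>R \<delta>)"
    by (subst sum_coord[symmetric]) (intro sum.cong; simp)
  then show "nonneg_comb \<Delta> x"
    unfolding nonneg_comb_def by (rule exI[where x = "\<lambda>\<delta>. nat \<lfloor>coord x \<delta>\<rfloor>"])
qed

lemma coord_root_Ints: "x \<in> R \<Longrightarrow> i \<in> \<Delta> \<Longrightarrow> coord x i \<in> \<int>"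
  using base unfolding is_base_def nonneg_comb_iff_coord
  by (metis Ints_minus Nats_subset_Ints coord_uminus minus_minus subsetD)

lemma root_coord_sign: "x \<in> R \<Longrightarrow> (\<forall>i\<in>\<Delta>. 0 \<le> coord x i) \<or> (\<forall>i\<in>\<Delta>. coord x i \<le> 0)"
  using base unfolding is_base_def nonneg_comb_iff_coord by (fastforce simp: Nats_altdef2)

lemma pos_roots_iff_coord: "x \<in> pos_roots R \<Delta> \<longleftrightarrow> x \<in> R \<and> (\<forall>i\<in>\<Delta>. 0 \<le> coord x i)"
  unfolding pos_roots_def nonneg_comb_iff_coord using coord_root_Ints by (auto simp: Nats_altdef2)

lemma root_le_iff_coord:
  "x \<in> R \<Longrightarrow> y \<in> R \<Longrightarrow> root_le \<Delta> x y \<longleftrightarrow> (\<forall>i\<in>\<Delta>. coord x i \<le> coord y i)"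
  unfolding root_le_def nonneg_comb_iff_coord using coord_root_Ints by (auto simp: Nats_altdef2)

lemma pos_rootI: "x \<in> R \<Longrightarrow> i \<in> \<Delta> \<Longrightarrow> 0 < coord x i \<Longrightarrow> x \<in> pos_roots R \<Delta>"
  using root_coord_sign[of x] pos_roots_iff_coord by fastforce

lemma mixed_sign_not_root:
  "i \<in> \<Delta> \<Longrightarrow> k \<in> \<Delta> \<Longrightarrow> 0 < coord x i \<Longrightarrow> coord x k < 0 \<Longrightarrow> x \<notin> R"
  using root_coord_sign[of x] by fastforce

lemma simple_pos_root: "\<alpha> \<in> \<Delta> \<Longrightarrow> \<alpha> \<in> pos_roots R \<Delta>"
  using base_subset_roots pos_roots_iff_coord by auto

lemma uminus_pos_root:
  assumes "x \<in> pos_roots R \<Delta>"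
  shows "- x \<notin> pos_roots R \<Delta>"
proof
  assume "- x \<in> pos_roots R \<Delta>"
  with assms have "x = 0"
    by (intro coord_eqI) (force simp: pos_roots_iff_coord)
  with assms show False
    using nonzero_root pos_roots_iff_coord by blast
qed

lemma pos_roots_upward:
  "x \<in> pos_roots R \<Delta> \<Longrightarrow> y \<in> R \<Longrightarrow> root_le \<Delta> x y \<Longrightarrow> y \<in> pos_roots R \<Delta>"
  unfolding pos_roots_iff_coord using root_le_iff_coord order_trans by blast

lemma pos_root_coord_off_simple:
  assumes "\<alpha> \<in> \<Delta>" and "x \<in> pos_roots R \<Delta>" and "x \<noteq> \<alpha>"
  obtains i where "i \<in> \<Delta>" "i \<noteq> \<alpha>" "0 < coord x i"
proof -
  have "\<exists>i\<in>\<Delta>. i \<noteq> \<alpha> \<and> 0 < coord x i"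
  proof (rule ccontr)
    assume "\<not> ?thesis"
    then have "coord x i = 0" if "i \<in> \<Delta>" "i \<noteq> \<alpha>" for i
      using that assms(2) by (force simp: pos_roots_iff_coord)
    then have x: "x = coord x \<alpha> *\<^sub>R \<alpha>"
      using assms(1) by (intro coord_eqI) auto
    then have "coord x \<alpha> = 1"
      using roots_reduced[of \<alpha> "coord x \<alpha>"] assms base_subset_roots
      by (force simp: pos_roots_iff_coord)
    then show False
      using x assms(3) by simp
  qed
  then show thesis
    using that by blast
qed

lemma coord_sref_off: "\<alpha> \<in> \<Delta> \<Longrightarrow> i \<noteq> \<alpha> \<Longrightarrow> coord (sref \<alpha> x) i = coord x i"
  unfolding sref_def by simp

lemma sref_pos_root:
  assumes "\<alpha> \<in> \<Delta>" and "\<beta> \<in> pos_roots R \<Delta>" and "\<beta> \<noteq> \<alpha>"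
  shows "sref \<alpha> \<beta> \<in> pos_roots R \<Delta>"
proof -
  obtain i where "i \<in> \<Delta>" "i \<noteq> \<alpha>" "0 < coord \<beta> i"
    using pos_root_coord_off_simple[OF assms] .
  moreover have "sref \<alpha> \<beta> \<in> R"
    using assms base_subset_roots sref_in_roots pos_roots_iff_coord by auto
  ultimately show ?thesis
    using pos_rootI coord_sref_off[OF assms(1)] by metis
qed

section \<open>Sums and differences of roots\<close>

lemma inner_sq_less_of_roots:
  assumes "x \<in> R" and "y \<in> R" and "x \<noteq> y" and "x \<noteq> - y"
  shows "(x \<bullet> y)\<^sup>2 < (x \<bullet> x) * (y \<bullet> y)"
proof -
  define l where "l = (x \<bullet> y) / (y \<bullet> y)"
  have yy: "y \<bullet> y > 0"
    using assms(2) nonzero_root by simp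
  have "x \<noteq> l *\<^sub>R y"
    using roots_reduced[OF assms(2), of l] assms by auto
  then have "0 < (x - l *\<^sub>R y) \<bullet> (x - l *\<^sub>R y)"
    by simp
  also have "\<dots> = x \<bullet> x - (x \<bullet> y)\<^sup>2 / (y \<bullet> y)"
    using yy unfolding l_def
    by (simp add: inner_diff_left inner_diff_right inner_commute field_simps power2_eq_square)
  finally show ?thesis
    using yy by (simp add: field_simps)
qed

text \<open>The two Cartan integers of \<open>x, y\<close> are positive with product \<open>< 4\<close>, so one of them is \<open>1\<close>
  and the corresponding reflection maps \<open>x\<close> to \<open>x - y\<close> or \<open>y\<close> to \<open>y - x\<close>.\<close>
lemma diff_in_roots:
  assumes x: "x \<in> R" and y: "y \<in> R" and "x \<noteq> y" and pos: "0 < x \<bullet> y"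
  shows "x - y \<in> R"
proof -
  have xx: "x \<bullet> x > 0" and yy: "y \<bullet> y > 0"
    using x y nonzero_root by auto
  have "x \<noteq> - y"
  proof
    assume "x = - y"
    then have "x \<bullet> y = - (y \<bullet> y)" by simp
    with pos yy show False by linarith
  qed
  then have cs: "(x \<bullet> y)\<^sup>2 < (x \<bullet> x) * (y \<bullet> y)"
    using inner_sq_less_of_roots assms by blast
  obtain m n :: int where m: "2 * (x \<bullet> y) / (y \<bullet> y) = m" and n: "2 * (y \<bullet> x) / (x \<bullet> x) = n"
    using cartan_integer[OF y x] cartan_integer[OF x y] by (auto elim!: Ints_cases)
  have "real_of_int m > 0" "real_of_int n > 0"
    using pos xx yy by (simp_all add: inner_commute zero_less_divide_iff flip: m n)
  then have "m > 0" "n > 0"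
    by simp_all
  have "real_of_int m * real_of_int n = 4 * (x \<bullet> y)\<^sup>2 / ((x \<bullet> x) * (y \<bullet> y))"
    unfolding m[symmetric] n[symmetric] by (simp add: inner_commute power2_eq_square)
  then have "real_of_int (m * n) < 4"
    using cs xx yy by (simp add: divide_less_eq)
  then have "m * n < 4"
    by linarith
  have "m = 1 \<or> n = 1"
  proof (rule ccontr)
    assume "\<not> ?thesis"
    with \<open>m > 0\<close> \<open>n > 0\<close> have "2 * 2 \<le> m * n"
      by (intro mult_mono) auto
    with \<open>m * n < 4\<close> show False
      by simp
  qed
  then show ?thesis
  proof
    assume "m = 1"
    then have "sref y x = x - y"
      using m pos by (simp add: sref_def)
    then show ?thesis
      using sref_in_roots[OF y x] by simp
  next
    assume "n = 1"
    then have "sref x y = - (x - y)"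
      using n pos by (simp add: sref_def inner_commute)
    then show ?thesis
      using sref_in_roots[OF x y] uminus_in_roots by fastforce
  qed
qed

lemma add_in_roots:
  assumes "x \<in> R" and "y \<in> R" and "x \<noteq> - y" and "x \<bullet> y < 0"
  shows "x + y \<in> R"
  using diff_in_roots[OF assms(1) uminus_in_roots[OF assms(2)]] assms by auto

lemma inner_nonpos_if_diff_notin_roots:
  "x \<in> R \<Longrightarrow> y \<in> R \<Longrightarrow> x \<noteq> y \<Longrightarrow> x - y \<notin> R \<Longrightarrow> x \<bullet> y \<le> 0"
  using diff_in_roots by force

lemma inner_simple_nonpos:
  assumes "\<alpha> \<in> \<Delta>" and "j \<in> \<Delta>" and "j \<noteq> \<alpha>"
  shows "\<alpha> \<bullet> j \<le> 0"
proof (rule ccontr)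
  assume "\<not> \<alpha> \<bullet> j \<le> 0"
  then have "\<alpha> - j \<in> R"
    using diff_in_roots[of \<alpha> j] assms base_subset_roots by auto
  moreover have "\<alpha> - j \<notin> R"
    using mixed_sign_not_root[of \<alpha> j] assms by simp
  ultimately show False by contradiction
qed

section \<open>Root strings\<close>

text \<open>\<open>(x + t\<alpha>) \<bullet> \<alpha>\<close> increases with \<open>t\<close> and is \<open>\<ge> 0\<close> at the break, so a later root \<open>x + t\<alpha>\<close>
  would force \<open>x + (t - 1)\<alpha>\<close> to be a root as well.\<close>
lemma alpha_string_stays_broken:
  assumes \<alpha>: "\<alpha> \<in> R" and not_multiple: "\<forall>c. x \<noteq> c *\<^sub>R \<alpha>"
    and "x + real k *\<^sub>R \<alpha> \<in> R" and "x + real (Suc k) *\<^sub>R \<alpha> \<notin> R"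
  shows "x + real (Suc k + m) *\<^sub>R \<alpha> \<notin> R"
proof -
  have ne: "x + t *\<^sub>R \<alpha> \<noteq> \<alpha>" "x + t *\<^sub>R \<alpha> \<noteq> - \<alpha>" for t
    using not_multiple[rule_format, of "1 - t"] not_multiple[rule_format, of "- 1 - t"]
    by (auto simp: algebra_simps)
  have aa: "\<alpha> \<bullet> \<alpha> > 0"
    using \<alpha> nonzero_root by simp
  have start: "0 \<le> (x + real k *\<^sub>R \<alpha>) \<bullet> \<alpha>"
    using add_in_roots[OF assms(3) \<alpha> ne(2)] assms(4) by (force simp: algebra_simps)
  show ?thesis
  proof (induction m)
    case 0
    show ?case using assms(4) by simp
  next
    case (Suc m)
    let ?b = "x + real (Suc k + Suc m) *\<^sub>R \<alpha>"
    have "?b \<bullet> \<alpha> = (x + real k *\<^sub>R \<alpha>) \<bullet> \<alpha> + real (m + 2) * (\<alpha> \<bullet> \<alpha>)"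
      by (simp add: inner_add_left algebra_simps)
    then have "0 < ?b \<bullet> \<alpha>"
      using start aa by (simp add: add_nonneg_pos)
    moreover have "?b - \<alpha> = x + real (Suc k + m) *\<^sub>R \<alpha>"
      by (simp add: of_nat_Suc scaleR_add_left algebra_simps scaleR_2)
    then have "?b - \<alpha> \<notin> R"
      using Suc.IH by metis
    ultimately show ?case
      using diff_in_roots[OF _ \<alpha> ne(1)] by blast
  qed
qed

lemma alpha_string_unbroken:
  assumes "\<alpha> \<in> R" and "\<forall>c. x \<noteq> c *\<^sub>R \<alpha>"
    and "x \<in> R" and "x + real n *\<^sub>R \<alpha> \<in> R" and "k \<le> n"
  shows "x + real k *\<^sub>R \<alpha> \<in> R"
  using \<open>k \<le> n\<close>
proof (induction k)
  case 0
  show ?case using assms(3) by simp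
next
  case (Suc k)
  have "x + real k *\<^sub>R \<alpha> \<in> R"
    using Suc by simp
  show ?case
  proof (rule ccontr)
    assume "x + real (Suc k) *\<^sub>R \<alpha> \<notin> R"
    then have "x + real (Suc k + (n - Suc k)) *\<^sub>R \<alpha> \<notin> R"
      using alpha_string_stays_broken[OF assms(1,2) \<open>x + real k *\<^sub>R \<alpha> \<in> R\<close>] by blast
    moreover have "Suc k + (n - Suc k) = n"
      using Suc.prems by simp
    ultimately show False
      using assms(4) by simp
  qed
qed

text \<open>Otherwise the inner products among \<open>q\<close>, \<open>q + j - \<alpha>\<close>, \<open>\<alpha>\<close> and \<open>j\<close> are all \<open>\<le> 0\<close>,
  which forces \<open>(q \<bullet> j)\<^sup>2 \<ge> (q \<bullet> q) (j \<bullet> j)\<close> against Cauchy-Schwarz.\<close>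
lemma exchange_minus_simple:
  assumes \<alpha>: "\<alpha> \<in> \<Delta>" and j: "j \<in> \<Delta>" "j \<noteq> \<alpha>"
    and q: "q \<in> R" and r: "q + j - \<alpha> \<in> R" and "q \<noteq> \<alpha>" and "q \<noteq> - j"
  shows "q - \<alpha> \<in> R"
proof (rule ccontr)
  assume q\<alpha>: "q - \<alpha> \<notin> R"
  have \<alpha>R: "\<alpha> \<in> R" and jR: "j \<in> R"
    using \<alpha> j base_subset_roots by auto
  have "q \<noteq> j"
  proof
    assume "q = j"
    then have "coord (q + j - \<alpha>) j = 2" "coord (q + j - \<alpha>) \<alpha> = -1"
      using \<alpha> j by auto
    then show False
      using mixed_sign_not_root[OF j(1) \<alpha>] r by simp
  qed
  have q\<alpha>_inner: "q \<bullet> \<alpha> \<le> 0"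
    using inner_nonpos_if_diff_notin_roots[OF q \<alpha>R \<open>q \<noteq> \<alpha>\<close> q\<alpha>] .
  have rj_inner: "(q + j - \<alpha>) \<bullet> j \<le> 0"
    using inner_nonpos_if_diff_notin_roots[OF r jR] q\<alpha> \<open>q \<noteq> \<alpha>\<close> by simp
  have "j - \<alpha> \<notin> R"
    using mixed_sign_not_root[OF j(1) \<alpha>, of "j - \<alpha>"] \<alpha> j by simp
  then have rq_inner: "(q + j - \<alpha>) \<bullet> q \<le> 0"
    using inner_nonpos_if_diff_notin_roots[OF r q] j(2) by simp
  have "(q + j - \<alpha>) \<bullet> q = q \<bullet> q + q \<bullet> j - q \<bullet> \<alpha>"
    and "(q + j - \<alpha>) \<bullet> j = q \<bullet> j + j \<bullet> j - \<alpha> \<bullet> j"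
    by (simp_all add: inner_add_left inner_diff_left inner_add_right inner_diff_right inner_commute)
  then have "q \<bullet> j \<le> - (q \<bullet> q)" and "q \<bullet> j \<le> - (j \<bullet> j)"
    using q\<alpha>_inner rj_inner rq_inner inner_simple_nonpos[OF \<alpha> j] by linarith+
  then have "(q \<bullet> q) * (j \<bullet> j) \<le> (- (q \<bullet> j)) * (- (q \<bullet> j))"
    using inner_ge_zero[of q] inner_ge_zero[of j] by (intro mult_mono) linarith+
  then have "(q \<bullet> q) * (j \<bullet> j) \<le> (q \<bullet> j)\<^sup>2"
    by (simp add: power2_eq_square)
  then show False
    using inner_sq_less_of_roots[OF q jR \<open>q \<noteq> j\<close> \<open>q \<noteq> - j\<close>] by linarith
qed

text \<open>The \<open>\<alpha>\<close>-string through \<open>x + j - n\<alpha>\<close> reaches \<open>x + j\<close> unbroken, and the exchange lemma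
  transports it, one step at a time, to the \<open>\<alpha>\<close>-string through \<open>x\<close>.\<close>
lemma string_remove_simple:
  assumes \<alpha>: "\<alpha> \<in> \<Delta>" and j: "j \<in> \<Delta>" "j \<noteq> \<alpha>"
    and x: "x \<in> pos_roots R \<Delta>" "x \<noteq> \<alpha>"
    and top: "x + j \<in> R" and bottom: "x + j - real n *\<^sub>R \<alpha> \<in> R"
  shows "x - real n *\<^sub>R \<alpha> \<in> R"
proof -
  define y where "y = x + j - real n *\<^sub>R \<alpha>"
  have \<alpha>R: "\<alpha> \<in> R"
    using \<alpha> base_subset_roots by auto
  have xj: "0 \<le> coord x j"
    using x j by (simp add: pos_roots_iff_coord)
  obtain i where i: "i \<in> \<Delta>" "i \<noteq> \<alpha>" "0 < coord x i"
    using pos_root_coord_off_simple[OF \<alpha> x] .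
  have "\<forall>t. y \<noteq> t *\<^sub>R \<alpha>"
  proof (intro allI notI)
    fix t assume "y = t *\<^sub>R \<alpha>"
    then have "coord y j = 0"
      using \<alpha> j by simp
    then show False
      using xj \<alpha> j unfolding y_def by simp
  qed
  moreover have "y \<in> R" and "y + real n *\<^sub>R \<alpha> \<in> R"
    using bottom top unfolding y_def by simp_all
  ultimately have string: "y + real k *\<^sub>R \<alpha> \<in> R" if "k \<le> n" for k
    using alpha_string_unbroken[OF \<alpha>R] that by blast
  have "x - real m *\<^sub>R \<alpha> \<in> R" if "m \<le> n" for m
    using that
  proof (induction m)
    case 0
    show ?case using x by (simp add: pos_roots_iff_coord)
  next
    case (Suc m)
    let ?q = "x - real m *\<^sub>R \<alpha>"
    have "?q + j - \<alpha> = y + real (n - Suc m) *\<^sub>R \<alpha>"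
      using Suc.prems unfolding y_def by (simp add: of_nat_diff algebra_simps)
    then have "?q + j - \<alpha> \<in> R"
      using string[of "n - Suc m"] by simp
    moreover have "?q \<noteq> \<alpha>"
      using i \<alpha> by (auto dest: arg_cong[where f = "\<lambda>v. coord v i"])
    moreover have "?q \<noteq> - j"
      using xj \<alpha> j by (auto dest: arg_cong[where f = "\<lambda>v. coord v j"])
    ultimately have "?q - \<alpha> \<in> R"
      using exchange_minus_simple[OF \<alpha> j] Suc by simp
    then show ?case
      by (simp add: algebra_simps)
  qed
  then show ?thesis
    by simp
qed

section \<open>Monotonicity of the lower ends of \<open>\<alpha>\<close>-strings\<close>

definition height :: "'a \<Rightarrow> real" where
  "height x = (\<Sum>i\<in>\<Delta>. coord x i)"

lemma height_add_simple: "j \<in> \<Delta> \<Longrightarrow> height (x + j) = height x + 1"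
  unfolding height_def by (simp add: sum.distrib finite_base)

lemma height_diff_simple: "j \<in> \<Delta> \<Longrightarrow> height (x - j) = height x - 1"
  unfolding height_def by (simp add: sum_subtractf finite_base)

lemma root_le_height:
  assumes "root_le \<Delta> x y"
  obtains n :: nat where "height y = height x + real n"
proof -
  have "\<forall>i\<in>\<Delta>. coord (y - x) i \<in> \<nat>"
    using assms unfolding root_le_def nonneg_comb_iff_coord .
  then have "coord (y - x) i = real (nat \<lfloor>coord (y - x) i\<rfloor>)" if "i \<in> \<Delta>" for i
    using that by (auto elim!: Nats_cases)
  then have "height (y - x) = real (\<Sum>i\<in>\<Delta>. nat \<lfloor>coord (y - x) i\<rfloor>)"
    unfolding height_def of_nat_sum by (rule sum.cong[OF refl])
  moreover have "height (y - x) = height y - height x"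
    unfolding height_def by (simp add: sum_subtractf)
  ultimately show thesis
    using that[of "\<Sum>i\<in>\<Delta>. nat \<lfloor>coord (y - x) i\<rfloor>"] by simp
qed

lemma root_le_height_eq:
  assumes "root_le \<Delta> x y" and "height x = height y"
  shows "x = y"
proof -
  have nonneg: "\<forall>i\<in>\<Delta>. 0 \<le> coord (y - x) i"
    using assms(1) unfolding root_le_def nonneg_comb_iff_coord by (auto simp: Nats_altdef2)
  moreover have "(\<Sum>i\<in>\<Delta>. coord (y - x) i) = 0"
    using assms(2) unfolding height_def by (simp add: sum_subtractf)
  ultimately have "\<forall>i\<in>\<Delta>. coord (y - x) i = 0"
    using sum_nonneg_eq_0_iff[OF finite_base] by blast
  then show ?thesis
    by (intro coord_eqI) simp
qed

lemma root_le_add_simple: "j \<in> \<Delta> \<Longrightarrow> root_le \<Delta> x (x + j)"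
  unfolding root_le_def nonneg_comb_iff_coord by simp

lemma root_le_pos_root_ne_simple:
  assumes "\<alpha> \<in> \<Delta>" and "\<gamma> \<in> pos_roots R \<Delta>" and "\<gamma> \<noteq> \<alpha>" and "x \<in> R" and "root_le \<Delta> \<gamma> x"
  shows "x \<noteq> \<alpha>"
proof -
  obtain i where "i \<in> \<Delta>" "i \<noteq> \<alpha>" "0 < coord \<gamma> i"
    using pos_root_coord_off_simple[OF assms(1-3)] .
  moreover have "coord \<gamma> i \<le> coord x i" if "i \<in> \<Delta>" for i
    using assms(2,4,5) that root_le_iff_coord pos_roots_iff_coord by blast
  ultimately show ?thesis
    using assms(1) by force
qed

lemma nonneg_comb_inner_pos_simple:
  assumes "nonneg_comb \<Delta> d" and "d \<noteq> 0"
  obtains i where "i \<in> \<Delta>" "0 < i \<bullet> d" "nonneg_comb \<Delta> (d - i)"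
proof -
  have d_coord: "coord d i \<in> \<int>" "0 \<le> coord d i" if "i \<in> \<Delta>" for i
    using assms(1) that unfolding nonneg_comb_iff_coord by (auto simp: Nats_altdef2)
  have "d \<bullet> d = (\<Sum>i\<in>\<Delta>. coord d i * (i \<bullet> d))"
    by (subst (1) sum_coord[symmetric]) (simp add: inner_sum_left)
  moreover have "0 < d \<bullet> d"
    using assms(2) by simp
  ultimately have "\<exists>i\<in>\<Delta>. 0 < coord d i * (i \<bullet> d)"
    using sum_nonpos[of \<Delta> "\<lambda>i. coord d i * (i \<bullet> d)"] by (force simp: not_less)
  then obtain i where i: "i \<in> \<Delta>" and "0 < coord d i * (i \<bullet> d)"
    by blast
  then have "0 < coord d i" and "0 < i \<bullet> d"
    using d_coord(2)[OF i] by (auto simp: zero_less_mult_iff)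
  then have "1 \<le> coord d i"
    using d_coord(1)[OF i] by (auto elim!: Ints_cases)
  then have "nonneg_comb \<Delta> (d - i)"
    using d_coord i unfolding nonneg_comb_iff_coord Nats_altdef2 by auto
  with i \<open>0 < i \<bullet> d\<close> show thesis
    using that by blast
qed

lemma root_le_step:
  assumes \<gamma>: "\<gamma> \<in> pos_roots R \<Delta>" and \<delta>: "\<delta> \<in> R" and "root_le \<Delta> \<gamma> \<delta>" and "\<gamma> \<noteq> \<delta>"
  obtains j where "j \<in> \<Delta>" "\<delta> - j \<in> R" "root_le \<Delta> \<gamma> (\<delta> - j)"
    | j where "j \<in> \<Delta>" "\<gamma> + j \<in> R" "root_le \<Delta> (\<gamma> + j) \<delta>"
proof -
  define d where "d = \<delta> - \<gamma>"
  obtain i where i: "i \<in> \<Delta>" and "0 < i \<bullet> d" and d_i: "nonneg_comb \<Delta> (d - i)"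
    using nonneg_comb_inner_pos_simple[of d] assms(3,4) unfolding root_le_def d_def by auto
  have iR: "i \<in> R"
    using i base_subset_roots by auto
  show thesis
  proof (cases "0 < \<delta> \<bullet> i")
    case True
    have "\<delta> \<noteq> i"
    proof
      assume "\<delta> = i"
      then have "- \<gamma> \<in> pos_roots R \<Delta>"
        using d_i \<gamma> uminus_in_roots unfolding d_def pos_roots_def by simp
      with \<gamma> show False
        using uminus_pos_root by blast
    qed
    then have "\<delta> - i \<in> R"
      using diff_in_roots[OF \<delta> iR _ True] by blast
    moreover have "root_le \<Delta> \<gamma> (\<delta> - i)"
      using d_i unfolding root_le_def d_def by (simp add: algebra_simps)
    ultimately show thesis
      using that(1)[OF i] by blast
  next
    case False
    then have "\<gamma> \<bullet> i < 0"
      using \<open>0 < i \<bullet> d\<close> unfolding d_def by (simp add: inner_diff_right inner_commute)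
    moreover have "\<gamma> \<noteq> - i"
      using \<gamma> simple_pos_root[OF i] uminus_pos_root by force
    ultimately have "\<gamma> + i \<in> R"
      using add_in_roots[OF _ iR] \<gamma> unfolding pos_roots_def by blast
    moreover have "root_le \<Delta> (\<gamma> + i) \<delta>"
      using d_i unfolding root_le_def d_def by (simp add: algebra_simps)
    ultimately show thesis
      using that(2)[OF i] by blast
  qed
qed

definition string_reaches :: "'a \<Rightarrow> 'a \<Rightarrow> real \<Rightarrow> bool" where
  "string_reaches \<alpha> x v \<longleftrightarrow> (\<exists>d::int. x + of_int d *\<^sub>R \<alpha> \<in> R \<and> coord x \<alpha> + d \<le> v)"

lemma string_reaches_remove_simple:
  assumes \<alpha>: "\<alpha> \<in> \<Delta>" and j: "j \<in> \<Delta>" and x: "x \<in> pos_roots R \<Delta>" "x \<noteq> \<alpha>"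
    and "x + j \<in> R" and "string_reaches \<alpha> (x + j) v"
  shows "string_reaches \<alpha> x v"
proof -
  obtain d :: int where d: "x + j + of_int d *\<^sub>R \<alpha> \<in> R" "coord (x + j) \<alpha> + d \<le> v"
    using assms(6) unfolding string_reaches_def by blast
  show ?thesis
  proof (cases "j = \<alpha>")
    case True
    then have "x + of_int (d + 1) *\<^sub>R \<alpha> \<in> R" "coord x \<alpha> + (d + 1) \<le> v"
      using d \<alpha> by (simp_all add: algebra_simps)
    then show ?thesis
      unfolding string_reaches_def by blast
  next
    case False
    have "x + of_int (min d 0) *\<^sub>R \<alpha> \<in> R"
    proof (cases "0 \<le> d")
      case True
      then show ?thesis
        using x by (simp add: pos_roots_iff_coord)
    next
      case False
      then have "x + j - real (nat (- d)) *\<^sub>R \<alpha> \<in> R"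
        using d(1) by simp
      then have "x - real (nat (- d)) *\<^sub>R \<alpha> \<in> R"
        by (rule string_remove_simple[OF \<alpha> j \<open>j \<noteq> \<alpha>\<close> x \<open>x + j \<in> R\<close>])
      with False show ?thesis
        by simp
    qed
    moreover have "coord x \<alpha> + min d 0 \<le> v"
      using d(2) j False by simp
    ultimately show ?thesis
      unfolding string_reaches_def by blast
  qed
qed

lemma string_reaches_mono:
  assumes \<alpha>: "\<alpha> \<in> \<Delta>" and \<gamma>: "\<gamma> \<in> pos_roots R \<Delta>" "\<gamma> \<noteq> \<alpha>" and \<delta>: "\<delta> \<in> R"
    and "root_le \<Delta> \<gamma> \<delta>" and "string_reaches \<alpha> \<delta> v"
  shows "string_reaches \<alpha> \<gamma> v"
proof -
  obtain n where "height \<delta> = height \<gamma> + real n"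
    using root_le_height[OF \<open>root_le \<Delta> \<gamma> \<delta>\<close>] .
  then show ?thesis
    using assms(2-)
  proof (induction n arbitrary: \<gamma> \<delta>)
    case 0
    then show ?case
      using root_le_height_eq by force
  next
    case (Suc n)
    then have "\<gamma> \<noteq> \<delta>"
      by auto
    with Suc.prems(2,4,5) show ?case
    proof (cases rule: root_le_step)
      case (1 j)
      have "\<delta> - j \<in> pos_roots R \<Delta>" "\<delta> - j \<noteq> \<alpha>"
        using 1 Suc.prems \<alpha> pos_roots_upward root_le_pos_root_ne_simple by blast+
      then have "string_reaches \<alpha> (\<delta> - j) v"
        using string_reaches_remove_simple[OF \<alpha> \<open>j \<in> \<Delta>\<close>] Suc.prems by simp
      moreover have "height (\<delta> - j) = height \<gamma> + real n"
        using Suc.prems(1) height_diff_simple[OF \<open>j \<in> \<Delta>\<close>] by simp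
      ultimately show ?thesis
        using Suc.IH 1 Suc.prems by blast
    next
      case (2 j)
      have "root_le \<Delta> \<gamma> (\<gamma> + j)"
        using root_le_add_simple[OF \<open>j \<in> \<Delta>\<close>] .
      then have "\<gamma> + j \<in> pos_roots R \<Delta>" "\<gamma> + j \<noteq> \<alpha>"
        using 2 Suc.prems \<alpha> pos_roots_upward root_le_pos_root_ne_simple by blast+
      moreover have "height \<delta> = height (\<gamma> + j) + real n"
        using Suc.prems(1) height_add_simple[OF \<open>j \<in> \<Delta>\<close>] by simp
      ultimately have "string_reaches \<alpha> (\<gamma> + j) v"
        using Suc.IH 2 Suc.prems by blast
      then show ?thesis
        using string_reaches_remove_simple[OF \<alpha> \<open>j \<in> \<Delta>\<close>] 2 Suc.prems by blast
    qed
  qed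
qed

lemma sref_eq_add_int_multiple:
  assumes "\<alpha> \<in> R" and "x \<in> R"
  obtains c :: int where "sref \<alpha> x = x + of_int c *\<^sub>R \<alpha>"
proof -
  obtain m :: int where "2 * (x \<bullet> \<alpha>) / (\<alpha> \<bullet> \<alpha>) = of_int m"
    using cartan_integer[OF assms] by (auto elim!: Ints_cases)
  then have "sref \<alpha> x = x + of_int (- m) *\<^sub>R \<alpha>"
    unfolding sref_def by simp
  then show thesis ..
qed

lemma pos_root_below_sref:
  assumes \<alpha>: "\<alpha> \<in> \<Delta>" and \<gamma>: "\<gamma> \<in> pos_roots R \<Delta>" "\<gamma> \<noteq> \<alpha>"
    and \<delta>: "\<delta> \<in> R" and le: "root_le \<Delta> \<gamma> \<delta>"
  obtains t :: nat where "\<gamma> - real t *\<^sub>R \<alpha> \<in> pos_roots R \<Delta>"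
    and "root_le \<Delta> (\<gamma> - real t *\<^sub>R \<alpha>) (sref \<alpha> \<delta>)"
proof -
  have \<alpha>R: "\<alpha> \<in> R" and \<gamma>R: "\<gamma> \<in> R"
    using \<alpha> \<gamma> base_subset_roots pos_roots_iff_coord by auto
  obtain c where c: "sref \<alpha> \<delta> = \<delta> + of_int c *\<^sub>R \<alpha>"
    using sref_eq_add_int_multiple[OF \<alpha>R \<delta>] .
  have "string_reaches \<alpha> \<delta> (coord \<delta> \<alpha> + c)"
    unfolding string_reaches_def using c sref_in_roots[OF \<alpha>R \<delta>] by auto
  then obtain d :: int where d: "\<gamma> + of_int d *\<^sub>R \<alpha> \<in> R" "coord \<gamma> \<alpha> + d \<le> coord \<delta> \<alpha> + c"
    using string_reaches_mono[OF \<alpha> \<gamma> \<delta> le] unfolding string_reaches_def by blast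
  define e where "e = min d 0"
  define \<eta> where "\<eta> = \<gamma> + of_int e *\<^sub>R \<alpha>"
  have \<eta>R: "\<eta> \<in> R"
    using d \<gamma>R unfolding \<eta>_def e_def by (cases "d \<le> 0") auto
  obtain i where "i \<in> \<Delta>" "i \<noteq> \<alpha>" "0 < coord \<gamma> i"
    using pos_root_coord_off_simple[OF \<alpha> \<gamma>] .
  then have "\<eta> \<in> pos_roots R \<Delta>"
    using pos_rootI[OF \<eta>R] \<alpha> unfolding \<eta>_def by simp
  moreover have "root_le \<Delta> \<eta> (sref \<alpha> \<delta>)"
  proof -
    have "coord \<eta> k \<le> coord (sref \<alpha> \<delta>) k" if "k \<in> \<Delta>" for k
      using le d(2) \<alpha> that root_le_iff_coord[OF \<gamma>R \<delta>]
      unfolding \<eta>_def e_def c by (cases "k = \<alpha>") auto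
    then show ?thesis
      using root_le_iff_coord \<eta>R sref_in_roots[OF \<alpha>R \<delta>] by blast
  qed
  moreover have "\<eta> = \<gamma> - real (nat (- e)) *\<^sub>R \<alpha>"
    unfolding \<eta>_def e_def by (simp add: algebra_simps)
  ultimately show thesis
    using that by metis
qed

lemma finite_pos_roots: "finite (pos_roots R \<Delta>)"
  using finite_roots unfolding pos_roots_def by simp

lemma weyl_linear_inj_roots: "w \<in> weyl R \<Longrightarrow> linear w \<and> inj w \<and> w ` R \<subseteq> R"
proof (induction rule: weyl.induct)
  case weyl_id
  show ?case by (simp add: id_def bounded_linear.linear)
next
  case (weyl_step \<alpha> w)
  have "inj (sref \<alpha>)"
    using sref_sref[OF nonzero_root[OF weyl_step(1)]] by (metis injI)
  then have "inj (sref \<alpha> \<circ> w)"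
    using weyl_step inj_compose by blast
  moreover have "linear (sref \<alpha> \<circ> w)"
    using weyl_step linear_compose linear_sref by blast
  moreover have "(sref \<alpha> \<circ> w) ` R \<subseteq> R"
    using weyl_step sref_in_roots by auto
  ultimately show ?case by blast
qed

lemma weyl_pos_root_ne_uminus:
  assumes "u \<in> weyl R" and "inv u \<alpha> \<in> pos_roots R \<Delta>" and "\<gamma> \<in> pos_roots R \<Delta>"
  shows "u \<gamma> \<noteq> - \<alpha>"
proof
  assume "u \<gamma> = - \<alpha>"
  then have "u (- \<gamma>) = \<alpha>"
    using weyl_linear_inj_roots[OF assms(1)] linear_neg by (metis minus_minus)
  then have "inv u \<alpha> = - \<gamma>"
    using weyl_linear_inj_roots[OF assms(1)] inv_f_f by metis
  with assms(2,3) show False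
    using uminus_pos_root by simp
qed

lemma pos_root_below_sref_image:
  assumes u: "u \<in> weyl R" and \<alpha>: "\<alpha> \<in> \<Delta>" and neg: "- u \<alpha> \<in> pos_roots R \<Delta>"
    and \<gamma>: "\<gamma> \<in> pos_roots R \<Delta>" "\<gamma> \<noteq> \<alpha>" and \<delta>: "\<delta> \<in> R" and le: "root_le \<Delta> \<gamma> \<delta>"
    and u\<gamma>: "u \<gamma> \<in> pos_roots R \<Delta>"
  obtains \<eta> where "\<eta> \<in> pos_roots R \<Delta>" "root_le \<Delta> \<eta> (sref \<alpha> \<delta>)"
    "u \<eta> \<in> pos_roots R \<Delta>" "root_le \<Delta> (u \<gamma>) (u \<eta>)"
proof -
  obtain t where \<eta>: "\<gamma> - real t *\<^sub>R \<alpha> \<in> pos_roots R \<Delta>"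
    "root_le \<Delta> (\<gamma> - real t *\<^sub>R \<alpha>) (sref \<alpha> \<delta>)"
    using pos_root_below_sref[OF \<alpha> \<gamma> \<delta> le] .
  have lin: "linear u" and uR: "u ` R \<subseteq> R"
    using weyl_linear_inj_roots[OF u] by auto
  define \<rho> where "\<rho> = - u \<alpha>"
  have "u (\<gamma> - real t *\<^sub>R \<alpha>) - u \<gamma> = real t *\<^sub>R \<rho>"
    unfolding \<rho>_def by (simp add: linear_diff[OF lin] linear_scale[OF lin])
  moreover have "\<forall>i\<in>\<Delta>. coord \<rho> i \<in> \<nat>"
    using neg unfolding \<rho>_def pos_roots_def nonneg_comb_iff_coord by blast
  ultimately have "root_le \<Delta> (u \<gamma>) (u (\<gamma> - real t *\<^sub>R \<alpha>))"
    unfolding root_le_def nonneg_comb_iff_coord by simp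
  moreover have "u (\<gamma> - real t *\<^sub>R \<alpha>) \<in> pos_roots R \<Delta>"
    using pos_roots_upward[OF u\<gamma>] calculation \<eta>(1) uR pos_roots_def by blast
  ultimately show thesis
    using that \<eta> by blast
qed

lemma sref_comp_lift:
  assumes u: "u \<in> weyl R" and \<alpha>: "\<alpha> \<in> \<Delta>"
    and inv_pos: "inv u \<alpha> \<in> pos_roots R \<Delta>" and neg: "- u \<alpha> \<in> pos_roots R \<Delta>"
    and S: "S \<subseteq> (sref \<alpha> \<circ> u) ` Adj R \<Delta> S \<inter> pos_roots R \<Delta>" and "\<beta> \<in> S"
  obtains \<eta> where "\<eta> \<in> Adj R \<Delta> (sref \<alpha> ` S)" "u \<eta> \<in> pos_roots R \<Delta>"
    "root_le \<Delta> (sref \<alpha> \<beta>) (u \<eta>)"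
proof -
  let ?s = "sref \<alpha>" and ?P = "pos_roots R \<Delta>"
  have lin: "linear u" and uR: "u ` R \<subseteq> R"
    using weyl_linear_inj_roots[OF u] by auto
  have \<alpha>R: "\<alpha> \<in> R"
    using \<alpha> base_subset_roots by auto
  obtain \<gamma> where \<gamma>: "\<gamma> \<in> Adj R \<Delta> S" and \<beta>: "\<beta> = ?s (u \<gamma>)"
    using S \<open>\<beta> \<in> S\<close> by auto
  obtain \<delta> where "\<delta> \<in> S" and "root_le \<Delta> \<gamma> \<delta>"
    using \<gamma> unfolding Adj_def by blast
  have \<gamma>P: "\<gamma> \<in> ?P" and \<beta>P: "\<beta> \<in> ?P" and \<delta>R: "\<delta> \<in> R"
    using \<gamma> Adj_subset_pos_roots S \<open>\<beta> \<in> S\<close> \<open>\<delta> \<in> S\<close> pos_roots_def by blast+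
  have u\<gamma>: "u \<gamma> = ?s \<beta>"
    using \<beta> sref_sref[OF nonzero_root[OF \<alpha>R]] by simp
  have "\<beta> \<noteq> \<alpha>"
  proof
    assume "\<beta> = \<alpha>"
    then have "u \<gamma> = - \<alpha>"
      using u\<gamma> sref_self[OF nonzero_root[OF \<alpha>R]] by simp
    then show False
      using weyl_pos_root_ne_uminus[OF u inv_pos \<gamma>P] by contradiction
  qed
  have "\<gamma> \<noteq> \<alpha>"
  proof
    assume "\<gamma> = \<alpha>"
    have "- u \<alpha> \<noteq> \<alpha>"
      using weyl_pos_root_ne_uminus[OF u inv_pos simple_pos_root[OF \<alpha>]] by (metis minus_minus)
    then have "?s (- u \<alpha>) \<in> ?P"
      using sref_pos_root[OF \<alpha> neg] by blast
    moreover have "?s (- u \<alpha>) = - \<beta>"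
      using \<beta> \<open>\<gamma> = \<alpha>\<close> linear_neg[OF linear_sref] by simp
    ultimately show False
      using uminus_pos_root[OF \<beta>P] by simp
  qed
  have "u \<gamma> \<in> ?P"
    using u\<gamma> sref_pos_root[OF \<alpha> \<beta>P \<open>\<beta> \<noteq> \<alpha>\<close>] by simp
  then obtain \<eta> where "\<eta> \<in> ?P" "root_le \<Delta> \<eta> (?s \<delta>)" "u \<eta> \<in> ?P" "root_le \<Delta> (u \<gamma>) (u \<eta>)"
    using pos_root_below_sref_image[OF u \<alpha> neg \<gamma>P \<open>\<gamma> \<noteq> \<alpha>\<close> \<delta>R \<open>root_le \<Delta> \<gamma> \<delta>\<close>] by blast
  moreover have "\<eta> \<in> Adj R \<Delta> (?s ` S)"
    using calculation \<open>\<delta> \<in> S\<close> unfolding Adj_def by blast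
  ultimately show thesis
    using that u\<gamma> by simp
qed

lemma sref_comp_post_fixed_transfer:
  assumes u: "u \<in> weyl R" and \<alpha>: "\<alpha> \<in> \<Delta>"
    and inv_pos: "inv u \<alpha> \<in> pos_roots R \<Delta>" and neg: "- u \<alpha> \<in> pos_roots R \<Delta>"
    and S: "S \<subseteq> (sref \<alpha> \<circ> u) ` Adj R \<Delta> S \<inter> pos_roots R \<Delta>"
  defines "T \<equiv> u ` Adj R \<Delta> (sref \<alpha> ` S) \<inter> pos_roots R \<Delta>"
  shows "T \<subseteq> u ` Adj R \<Delta> T \<inter> pos_roots R \<Delta>" and "S \<noteq> {} \<Longrightarrow> T \<noteq> {}"
proof -
  note lift = sref_comp_lift[OF u \<alpha> inv_pos neg S]
  show "T \<subseteq> u ` Adj R \<Delta> T \<inter> pos_roots R \<Delta>"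
  proof
    fix x assume "x \<in> T"
    then obtain y \<beta> where x: "x = u y" "x \<in> pos_roots R \<Delta>" and y: "y \<in> pos_roots R \<Delta>"
      and "\<beta> \<in> S" and "root_le \<Delta> y (sref \<alpha> \<beta>)"
      unfolding T_def Adj_def by blast
    obtain \<eta> where "u \<eta> \<in> T" and "root_le \<Delta> (sref \<alpha> \<beta>) (u \<eta>)"
      using lift[OF \<open>\<beta> \<in> S\<close>] unfolding T_def by blast
    then have "y \<in> Adj R \<Delta> T"
      using y root_le_trans[OF \<open>root_le \<Delta> y (sref \<alpha> \<beta>)\<close>] unfolding Adj_def by blast
    with x show "x \<in> u ` Adj R \<Delta> T \<inter> pos_roots R \<Delta>"
      by blast
  qed
  show "T \<noteq> {}" if "S \<noteq> {}"
    using that lift unfolding T_def by (metis IntI all_not_in_conv image_eqI)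
qed

end

theorem lemma4:
  fixes R \<Delta> :: "'a::euclidean_space set" and u :: "'a \<Rightarrow> 'a" and \<alpha> :: 'a
  assumes "root_system R" and "is_base R \<Delta>" and "indecomposable R"
    and "u \<in> weyl R" and "rational R \<Delta> u" and "u \<noteq> longest R \<Delta>"
    and "\<alpha> \<in> \<Delta>" and "inv u \<alpha> \<in> pos_roots R \<Delta>" and "- (u \<alpha>) \<in> pos_roots R \<Delta>"
  shows "rational R \<Delta> (sref \<alpha> \<circ> u)"
proof -
  interpret based_root_system R \<Delta>
    using assms(1,2) by unfold_locales
  show ?thesis
    unfolding rational_iff_no_post_fixed[OF finite_pos_roots]
  proof (intro allI impI)
    fix S assume "S \<subseteq> (sref \<alpha> \<circ> u) ` Adj R \<Delta> S \<inter> pos_roots R \<Delta>"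
    from sref_comp_post_fixed_transfer[OF assms(4,7-9) this] show "S = {}"
      using assms(5) unfolding rational_iff_no_post_fixed[OF finite_pos_roots] by blast
  qed
qed

end
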